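(* On $\mathbb{R}_+$ let $f_0(x)=e^{-x}$ and $f_c(x)=(x-1)^2e^{-x}$. Then $f_0\succ f_c$.
   Context: Majorization on $\mathbb{R}_+$ (Lebesgue measure): $f\succ g$ means $\int_0^\infty f=\int_0^\infty g$ and $\int_0^\infty[f(x)-t]_+dx\ge\int_0^\infty[g(x)-t]_+dx$ for all $t\ge0$, where $[z]_+=\max(z,0)$. *)

theory Defs
  imports "HOL-Analysis.Analysis"
begin

definition majorizes :: "(real \<Rightarrow> real) \<Rightarrow> (real \<Rightarrow> real) \<Rightarrow> bool" where
  "majorizes f g \<longleftrightarrow>
     (\<integral>\<^sup>+ x \<in> {0..}. ennreal (f x) \<partial>lborel) = (\<integral>\<^sup>+ x \<in> {0..}. ennreal (g x) \<partial>lborel) \<and>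
     (\<forall>t::real. t \<ge> 0 \<longrightarrow>
        (\<integral>\<^sup>+ x \<in> {0..}. ennreal (max (f x - t) 0) \<partial>lborel)
          \<ge> (\<integral>\<^sup>+ x \<in> {0..}. ennreal (max (g x - t) 0) \<partial>lborel))"

end

theory Submission
  imports Defs
begin

text \<open>Both functions have integral 1, with antiderivatives \<open>-e\<^sup>-\<^sup>x\<close> and \<open>-(x\<^sup>2 + 1) e\<^sup>-\<^sup>x\<close>.
  For \<open>t \<ge> 1/5\<close> the positive parts compare pointwise, because \<open>f\<^sub>c \<le> f\<^sub>0\<close> on \<open>[0, 1]\<close> and
  \<open>f\<^sub>c \<le> 1/5\<close> on \<open>[1/2, \<infinity>)\<close>.  For \<open>t < 1/5\<close> split at 4.  On \<open>[1/2, 4]\<close> the chord bound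
  \<open>[y - t]\<^sub>+ \<le> (1 - 5t) y\<close> gains \<open>5t \<integral> f\<^sub>c \<ge> 2t\<close>, which pays for the loss \<open>2t\<close> of \<open>[f\<^sub>0 - t]\<^sub>+\<close>
  against \<open>f\<^sub>0\<close> on \<open>[0, 2]\<close>.  On \<open>(4, \<infinity>)\<close> the function \<open>f\<^sub>c\<close> dominates the translate
  \<open>f\<^sub>0 (x - 2)\<close>, so \<open>[f\<^sub>c - t]\<^sub>+\<close> is at most \<open>[f\<^sub>0 (x - 2) - t]\<^sub>+\<close> plus the surplus
  \<open>f\<^sub>c (x) - f\<^sub>0 (x - 2)\<close>; the translated part integrates to the tail of \<open>[f\<^sub>0 - t]\<^sub>+\<close> on
  \<open>(2, \<infinity>)\<close>, and the surplus integrates to \<open>17 e\<^sup>-\<^sup>4 - e\<^sup>-\<^sup>2\<close>, exactly what the bounds on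
  \<open>[0, 4]\<close> and \<open>[0, 2]\<close> leave over.\<close>

lemma exp_one_bounds: "2718/1000 \<le> exp (1::real)" "exp (1::real) \<le> 272/100"
  using e_approx_32 e_less_272 by (auto simp: abs_if split: if_split_asm)

lemma exp_nat_eq_power: "exp (real n) = exp 1 ^ n"
  by (simp add: exp_of_nat_mult[symmetric])

lemma exp_two_le: "exp (2::real) \<le> 9"
proof -
  have "exp 1 ^ 2 \<le> (272/100::real) ^ 2"
    by (rule power_mono) (use exp_one_bounds in auto)
  then show ?thesis
    using exp_nat_eq_power[of 2] by (simp add: eval_nat_numeral)
qed

lemma exp_minus_three_lt: "exp (-3::real) < 1/20"
proof -
  have "(2718/1000::real) ^ 3 \<le> exp 1 ^ 3"
    by (rule power_mono) (use exp_one_bounds in auto)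
  then have "20 < exp (3::real)"
    using exp_nat_eq_power[of 3] by (simp add: eval_nat_numeral)
  then show ?thesis
    by (simp add: exp_minus field_simps)
qed

lemma exp_minus_four_le: "exp (-4::real) \<le> 1/54"
proof -
  have "(2718/1000::real) ^ 4 \<le> exp 1 ^ 4"
    by (rule power_mono) (use exp_one_bounds in auto)
  then have "54 \<le> exp (4::real)"
    using exp_nat_eq_power[of 4] by (simp add: eval_nat_numeral)
  then show ?thesis
    by (simp add: exp_minus field_simps)
qed

lemma exp_minus_half_ge: "3/5 \<le> exp (-(1/2)::real)"
proof -
  have "exp (1/2::real) ^ 2 = exp 1"
    by (simp add: exp_of_nat_mult[symmetric])
  then have "exp (1/2::real) ^ 2 \<le> (5/3) ^ 2"
    using exp_one_bounds by (simp add: eval_nat_numeral)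
  then have "exp (1/2::real) \<le> 5/3"
    by (rule power2_le_imp_le) simp
  then show ?thesis
    by (simp add: exp_minus field_simps)
qed

lemma tendsto_exp_minus_at_top: "((\<lambda>x::real. exp (-x)) \<longlongrightarrow> 0) at_top"
  using tendsto_power_div_exp_0[of 0] by (simp add: exp_minus field_simps)

lemma pos_part_le_chord:
  fixes c t y :: real
  assumes "0 \<le> t" "t \<le> c" "0 \<le> y" "y \<le> c"
  shows "max (y - t) 0 \<le> (1 - t / c) * y"
proof (cases "c = 0")
  case False
  then have "0 < c"
    using assms by auto
  moreover have "t * y \<le> t * c" "t * y \<le> c * y"
    using assms by (auto intro: mult_left_mono mult_right_mono)
  ultimately have "t * y / c \<le> t" "t * y / c \<le> y"
    by (simp_all add: divide_le_eq mult.commute)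
  then show ?thesis
    by (simp add: algebra_simps)
qed (use assms in auto)

lemma nn_integral_atLeast_split:
  fixes f :: "real \<Rightarrow> ennreal"
  assumes "f \<in> borel_measurable borel" "a \<le> b"
  shows "(\<integral>\<^sup>+x\<in>{a..}. f x \<partial>lborel) = (\<integral>\<^sup>+x\<in>{a..b}. f x \<partial>lborel) + (\<integral>\<^sup>+x\<in>{b<..}. f x \<partial>lborel)"
proof -
  have "{a..} = {a..b} \<union> {b<..}"
    using assms(2) by auto
  then show ?thesis
    using assms(1) by (simp only:) (rule nn_integral_disjoint_pair, auto)
qed

lemma nn_integral_greaterThan_shift:
  fixes f :: "real \<Rightarrow> ennreal"
  assumes "f \<in> borel_measurable borel"
  shows "(\<integral>\<^sup>+x\<in>{a<..}. f (x - c) \<partial>lborel) = (\<integral>\<^sup>+x\<in>{a - c<..}. f x \<partial>lborel)"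
proof -
  have "(\<integral>\<^sup>+x\<in>{a<..}. f (x - c) \<partial>lborel)
      = ennreal \<bar>1\<bar> * (\<integral>\<^sup>+x. f (c + 1 * x - c) * indicator {a<..} (c + 1 * x) \<partial>lborel)"
    using assms by (intro nn_integral_real_affine) auto
  also have "\<dots> = (\<integral>\<^sup>+x\<in>{a - c<..}. f x \<partial>lborel)"
    by (auto intro!: nn_integral_cong split: split_indicator)
  finally show ?thesis .
qed

lemma nn_integral_Icc_eq_integral:
  fixes f :: "real \<Rightarrow> real"
  assumes "continuous_on {a..b} f" "\<And>x. x \<in> {a..b} \<Longrightarrow> 0 \<le> f x"
  shows "(\<integral>\<^sup>+x\<in>{a..b}. ennreal (f x) \<partial>lborel) = ennreal (integral {a..b} f)"
  by (rule nn_integral_has_integral_lebesgue'[OF assms(2)])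
     (auto intro!: integrable_integral integrable_continuous_interval assms(1))

lemma has_integral_Icc_antideriv:
  fixes F f :: "real \<Rightarrow> real"
  assumes "a \<le> b" "\<And>x. (F has_real_derivative f x) (at x)"
  shows "(f has_integral (F b - F a)) {a..b}"
  by (rule fundamental_theorem_of_calculus[OF assms(1)])
     (auto simp: has_real_derivative_iff_has_vector_derivative[symmetric]
           intro: has_field_derivative_at_within assms(2))

definition fc :: "real \<Rightarrow> real" where
  "fc x = (x - 1)^2 * exp (- x)"

definition fc_antideriv :: "real \<Rightarrow> real" where
  "fc_antideriv x = - (x^2 + 1) * exp (- x)"

lemma fc_nonneg: "0 \<le> fc x"
  by (simp add: fc_def)

lemma fc_continuous_on: "continuous_on A fc"
  unfolding fc_def by (intro continuous_intros)

lemma borel_measurable_fc [measurable]: "fc \<in> borel_measurable borel"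
  by (intro borel_measurable_continuous_onI fc_continuous_on)

lemma has_real_derivative_fc_antideriv: "(fc_antideriv has_real_derivative fc x) (at x)"
  unfolding fc_antideriv_def fc_def
  by (rule derivative_eq_intros refl | simp)+ (simp add: power2_eq_square algebra_simps)

lemma tendsto_fc_antideriv_at_top: "(fc_antideriv \<longlongrightarrow> 0) at_top"
proof -
  have "((\<lambda>x::real. - (x^2 / exp x + exp (-x))) \<longlongrightarrow> - (0 + 0)) at_top"
    by (intro tendsto_intros tendsto_power_div_exp_0 tendsto_exp_minus_at_top)
  moreover have "- (x^2 / exp x + exp (-x)) = fc_antideriv x" for x :: real
    by (simp add: fc_antideriv_def exp_minus field_simps)
  ultimately show ?thesis
    by simp
qed

lemma has_integral_fc: "a \<le> b \<Longrightarrow> (fc has_integral (fc_antideriv b - fc_antideriv a)) {a..b}"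
  by (rule has_integral_Icc_antideriv) (auto intro: has_real_derivative_fc_antideriv)

lemma fc_le_exp_minus: "0 \<le> x \<Longrightarrow> x \<le> 2 \<Longrightarrow> fc x \<le> exp (- x)"
proof -
  assume "0 \<le> x" "x \<le> 2"
  then have "\<bar>x - 1\<bar> ^ 2 \<le> 1 ^ 2"
    by (intro power_mono) auto
  then show ?thesis
    unfolding fc_def by (intro mult_left_le_one_le) auto
qed

text \<open>\<open>4 e\<^sup>-\<^sup>3\<close> is the value of \<open>f\<^sub>c\<close> at its local maximum \<open>x = 3\<close>; the bound is
  \<open>u \<le> e\<^sup>u\<^sup>-\<^sup>1\<close> for \<open>u = (x - 1)/2\<close>, squared.\<close>

lemma fc_le_four_exp_minus_three: "1 \<le> x \<Longrightarrow> fc x \<le> 4 * exp (-3)"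
proof -
  assume "1 \<le> x"
  define u where "u = (x - 1) / 2"
  have "u ^ 2 \<le> exp (u - 1) ^ 2"
    using exp_ge_add_one_self[of "u - 1"] \<open>1 \<le> x\<close> by (intro power_mono) (auto simp: u_def)
  also have "exp (u - 1) ^ 2 = exp (x - 3)"
    by (simp add: power2_eq_square exp_add[symmetric] u_def field_simps)
  finally have "(x - 1)^2 \<le> 4 * exp (x - 3)"
    by (simp add: u_def power_divide)
  then have "(x - 1)^2 * exp (- x) \<le> 4 * exp (x - 3) * exp (- x)"
    by (rule mult_right_mono) simp
  then show ?thesis
    by (simp add: fc_def mult.assoc exp_add[symmetric])
qed

lemma fc_le_fifth:
  assumes "1/2 \<le> x"
  shows "fc x \<le> 1/5"
proof (cases "x \<le> 1")
  case True
  with assms have "(1 - x)^2 \<le> (1/2)^2"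
    by (intro power_mono) auto
  moreover have "exp (- x) \<le> 2/3"
  proof -
    have "3/2 \<le> exp (1/2::real)"
      using exp_ge_add_one_self[of "1/2::real"] by simp
    then have "exp (- (1/2)) \<le> (2/3::real)"
      by (simp add: exp_minus field_simps)
    then show ?thesis
      using assms by (smt (verit) exp_le_cancel_iff)
  qed
  ultimately have "(1 - x)^2 * exp (- x) \<le> (1/2)^2 * (2/3)"
    by (intro mult_mono) auto
  then have "fc x \<le> 1/6"
    by (simp add: fc_def power2_commute power_divide)
  then show ?thesis
    by simp
next
  case False
  then show ?thesis
    using fc_le_four_exp_minus_three[of x] exp_minus_three_lt by simp
qed

lemma exp_shift_le_fc: "4 \<le> x \<Longrightarrow> exp (2 - x) \<le> fc x"
proof -
  assume "4 \<le> x"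
  then have "exp 2 \<le> (x - 1)^2"
    using exp_two_le power_mono[of 3 "x - 1" 2] by simp
  then have "exp 2 * exp (- x) \<le> fc x"
    unfolding fc_def by (rule mult_right_mono) simp
  then show ?thesis
    by (simp add: exp_diff exp_minus field_simps)
qed

lemma nn_integral_exp_minus: "(\<integral>\<^sup>+x\<in>{0..}. ennreal (exp (- x)) \<partial>lborel) = 1"
proof -
  have "(\<integral>\<^sup>+x\<in>{0..}. ennreal (exp (- x)) \<partial>lborel) = ennreal (0 - (- exp (- 0)))"
    by (rule nn_integral_FTC_atLeast[where F="\<lambda>x. - exp (- x)"])
       (auto intro!: derivative_eq_intros tendsto_exp_minus_at_top[THEN tendsto_minus, simplified])
  then show ?thesis
    by simp
qed

lemma nn_integral_fc: "(\<integral>\<^sup>+x\<in>{0..}. ennreal (fc x) \<partial>lborel) = 1"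
proof -
  have "(\<integral>\<^sup>+x\<in>{0..}. ennreal (fc x) \<partial>lborel) = ennreal (0 - fc_antideriv 0)"
    by (rule nn_integral_FTC_atLeast)
       (auto intro!: has_real_derivative_fc_antideriv tendsto_fc_antideriv_at_top fc_nonneg)
  then show ?thesis
    by (simp add: fc_antideriv_def)
qed

lemma fc_pos_part_le_exp_pos_part:
  assumes "1/5 \<le> t" "0 \<le> x"
  shows "max (fc x - t) 0 \<le> max (exp (- x) - t) 0"
proof (cases "x \<le> 1")
  case True
  then show ?thesis
    using fc_le_exp_minus[of x] assms by simp
next
  case False
  then show ?thesis
    using fc_le_fifth[of x] assms by simp
qed

lemma nn_integral_pos_part_le_large:
  assumes "1/5 \<le> t"
  shows "(\<integral>\<^sup>+x\<in>{0..}. ennreal (max (fc x - t) 0) \<partial>lborel)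
       \<le> (\<integral>\<^sup>+x\<in>{0..}. ennreal (max (exp (- x) - t) 0) \<partial>lborel)"
  using fc_pos_part_le_exp_pos_part[OF assms]
  by (intro nn_integral_mono) (auto split: split_indicator intro: ennreal_leI)

lemma integral_fc_pos_part_le:
  assumes "0 \<le> t" "t \<le> 1/5"
  shows "integral {0..4} (\<lambda>x. max (fc x - t) 0) \<le> 1 - 17 * exp (-4) - 2 * t"
proof -
  let ?P = "\<lambda>x. max (fc x - t) 0"
  let ?A = "fc_antideriv 4 - fc_antideriv (1/2)"
  have integrable: "?P integrable_on {a..b}" for a b
    by (intro integrable_continuous_interval continuous_intros fc_continuous_on)
  have "2/5 \<le> ?A"
    using exp_minus_four_le exp_minus_half_ge by (simp add: fc_antideriv_def power2_eq_square)
  then have gain: "2 * t \<le> 5 * t * ?A"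
    using mult_left_mono[of "2/5" ?A t] assms(1) by simp
  have "integral {0..1/2} ?P \<le> fc_antideriv (1/2) - fc_antideriv 0"
    using assms(1) fc_nonneg
    by (intro has_integral_le[OF integrable_integral[OF integrable] has_integral_fc]) auto
  moreover have "integral {1/2..4} ?P \<le> (1 - 5 * t) * ?A"
  proof (rule has_integral_le[OF integrable_integral[OF integrable]])
    fix x :: real
    assume "x \<in> {1/2..4}"
    then show "?P x \<le> (1 - 5 * t) * fc x"
      using pos_part_le_chord[of t "1/5" "fc x"] fc_le_fifth[of x] fc_nonneg[of x] assms
      by (simp add: mult.commute[of 5 t])
  qed (rule has_integral_mult_right, rule has_integral_fc, simp)
  moreover have "integral {0..1/2} ?P + integral {1/2..4} ?P = integral {0..4} ?P"
    by (rule Henstock_Kurzweil_Integration.integral_combine) (auto intro: integrable)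
  ultimately show ?thesis
    using gain by (simp add: fc_antideriv_def algebra_simps)
qed

lemma integral_exp_pos_part_ge:
  fixes t :: real
  shows "1 - exp (-2) - 2 * t \<le> integral {0..2} (\<lambda>x. max (exp (- x) - t) 0)"
proof -
  have "((\<lambda>x. exp (- x) - t) has_integral ((- exp (-2) - t * 2) - (- exp (- 0) - t * 0))) {0..2}"
    by (rule has_integral_Icc_antideriv[where F="\<lambda>x. - exp (- x) - t * x"])
       (auto intro!: derivative_eq_intros)
  moreover have "(\<lambda>x. max (exp (- x) - t) 0) integrable_on {0..2}"
    by (intro integrable_continuous_interval continuous_intros)
  ultimately have "(- exp (-2) - t * 2) - (- exp (- 0) - t * 0) \<le> integral {0..2} (\<lambda>x. max (exp (- x) - t) 0)"
    by (intro has_integral_le[OF _ integrable_integral]) auto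
  then show ?thesis
    by simp
qed

lemma nn_integral_fc_pos_part_tail_le:
  "(\<integral>\<^sup>+x\<in>{4<..}. ennreal (max (fc x - t) 0) \<partial>lborel)
     \<le> (\<integral>\<^sup>+x\<in>{2<..}. ennreal (max (exp (- x) - t) 0) \<partial>lborel) + ennreal (17 * exp (-4) - exp (-2))"
proof -
  let ?Q = "\<lambda>x. ennreal (max (exp (- x) - t) 0)"
  let ?surplus = "\<lambda>x. fc x - exp (2 - x)"
  have "ennreal (max (fc x - t) 0) \<le> ?Q (x - 2) + ennreal (?surplus x)" if "4 < x" for x
    using exp_shift_le_fc[of x] that
    by (simp add: ennreal_plus[symmetric] del: ennreal_plus)
  then have "(\<integral>\<^sup>+x\<in>{4<..}. ennreal (max (fc x - t) 0) \<partial>lborel)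
      \<le> (\<integral>\<^sup>+x. ?Q (x - 2) * indicator {4<..} x + ennreal (?surplus x) * indicator {4<..} x \<partial>lborel)"
    by (intro nn_integral_mono) (auto split: split_indicator)
  also have "\<dots> = (\<integral>\<^sup>+x\<in>{4<..}. ?Q (x - 2) \<partial>lborel) + (\<integral>\<^sup>+x\<in>{4<..}. ennreal (?surplus x) \<partial>lborel)"
    by (intro nn_integral_add) auto
  also have "(\<integral>\<^sup>+x\<in>{4<..}. ?Q (x - 2) \<partial>lborel) = (\<integral>\<^sup>+x\<in>{2<..}. ?Q x \<partial>lborel)"
    using nn_integral_greaterThan_shift[where f = ?Q and a = 4 and c = 2] by simp
  also have "(\<integral>\<^sup>+x\<in>{4<..}. ennreal (?surplus x) \<partial>lborel) \<le> (\<integral>\<^sup>+x\<in>{4..}. ennreal (?surplus x) \<partial>lborel)"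
    by (intro nn_integral_mono) (auto split: split_indicator)
  also have "\<dots> = ennreal (0 - (fc_antideriv 4 + exp (2 - 4)))"
  proof (rule nn_integral_FTC_atLeast)
    show "((\<lambda>x. fc_antideriv x + exp (2 - x)) \<longlongrightarrow> 0) at_top"
      using tendsto_add[OF tendsto_fc_antideriv_at_top tendsto_mult_left[OF tendsto_exp_minus_at_top, of "exp 2"]]
      by (simp add: exp_diff exp_minus field_simps)
  qed (auto intro!: derivative_eq_intros has_real_derivative_fc_antideriv exp_shift_le_fc)
  finally show ?thesis
    by (simp add: fc_antideriv_def)
qed

lemma nn_integral_pos_part_le_small:
  assumes "0 \<le> t" "t \<le> 1/5"
  shows "(\<integral>\<^sup>+x\<in>{0..}. ennreal (max (fc x - t) 0) \<partial>lborel)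
       \<le> (\<integral>\<^sup>+x\<in>{0..}. ennreal (max (exp (- x) - t) 0) \<partial>lborel)"
proof -
  let ?P = "\<lambda>x. max (fc x - t) 0"
  let ?Q = "\<lambda>x. max (exp (- x) - t) 0"
  have "0 \<le> integral {0..4} ?P"
    by (intro integral_nonneg integrable_continuous_interval continuous_intros fc_continuous_on) auto
  then have head_bound_nonneg: "0 \<le> 1 - 17 * exp (-4) - 2 * t"
    using integral_fc_pos_part_le[OF assms] by linarith
  have "exp 2 * exp (-4) \<le> 9 * exp (-4::real)"
    using exp_two_le by (intro mult_right_mono) auto
  moreover have "exp 2 * exp (-4) = exp (-2::real)"
    by (simp add: exp_add[symmetric])
  ultimately have surplus_nonneg: "0 \<le> 17 * exp (-4) - exp (-2::real)"
    using exp_gt_zero[of "-4::real"] by linarith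
  have "(\<integral>\<^sup>+x\<in>{0..4}. ennreal (?P x) \<partial>lborel) = ennreal (integral {0..4} ?P)"
    by (intro nn_integral_Icc_eq_integral continuous_intros fc_continuous_on) auto
  then have "(\<integral>\<^sup>+x\<in>{0..}. ennreal (?P x) \<partial>lborel)
      = ennreal (integral {0..4} ?P) + (\<integral>\<^sup>+x\<in>{4<..}. ennreal (?P x) \<partial>lborel)"
    using nn_integral_atLeast_split[of "\<lambda>x. ennreal (?P x)" 0 4] by simp
  also have "\<dots> \<le> ennreal (1 - 17 * exp (-4) - 2 * t)
      + ((\<integral>\<^sup>+x\<in>{2<..}. ennreal (?Q x) \<partial>lborel) + ennreal (17 * exp (-4) - exp (-2)))"
    by (intro add_mono ennreal_leI integral_fc_pos_part_le assms nn_integral_fc_pos_part_tail_le)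
  also have "\<dots> = ennreal (1 - exp (-2) - 2 * t) + (\<integral>\<^sup>+x\<in>{2<..}. ennreal (?Q x) \<partial>lborel)"
    using head_bound_nonneg surplus_nonneg
    by (simp add: ennreal_plus[symmetric] add_ac del: ennreal_plus)
  also have "\<dots> \<le> ennreal (integral {0..2} ?Q) + (\<integral>\<^sup>+x\<in>{2<..}. ennreal (?Q x) \<partial>lborel)"
    by (intro add_right_mono ennreal_leI integral_exp_pos_part_ge)
  also have "\<dots> = (\<integral>\<^sup>+x\<in>{0..}. ennreal (?Q x) \<partial>lborel)"
    using nn_integral_atLeast_split[of "\<lambda>x. ennreal (?Q x)" 0 2]
      nn_integral_Icc_eq_integral[of 0 2 ?Q] by (simp add: continuous_intros)
  finally show ?thesis .
qed

theorem mainTheorem8: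
  shows "majorizes (\<lambda>x. exp (- x)) (\<lambda>x. (x - 1)^2 * exp (- x))"
  unfolding majorizes_def fc_def[symmetric]
proof (intro conjI allI impI)
  show "(\<integral>\<^sup>+x\<in>{0..}. ennreal (exp (- x)) \<partial>lborel) = (\<integral>\<^sup>+x\<in>{0..}. ennreal (fc x) \<partial>lborel)"
    by (simp add: nn_integral_exp_minus nn_integral_fc)
  fix t :: real
  assume "0 \<le> t"
  then show "(\<integral>\<^sup>+x\<in>{0..}. ennreal (max (fc x - t) 0) \<partial>lborel)
      \<le> (\<integral>\<^sup>+x\<in>{0..}. ennreal (max (exp (- x) - t) 0) \<partial>lborel)"
    using nn_integral_pos_part_le_small nn_integral_pos_part_le_large by (cases "t \<le> 1/5") auto
qed

end
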